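(* There is a normal infinite word $x=a_1a_2a_3\cdots$ over the alphabet $\{0,1\}$ such that $x=\mathrm{even}(x)$, i.e. $a_{2n}=a_n$ for every $n\ge1$.
   Context: For $x=a_1a_2a_3\cdots$, $\mathrm{even}(x)=a_2a_4a_6\cdots$. For words $w,u$, $|w|^{al}_u=|\{i: w[i..i+|u|-1]=u,\ i\equiv1\bmod|u|\}|$ (positions start at 1). An infinite word $x$ over $A$ is normal if for every $\ell\ge1$ and every $u\in A^\ell$, $\lim_{n\to\infty}|x[1..n]|^{al}_u/(n/\ell)=|A|^{-\ell}$. *)

theory Defs
  imports Complex_Main
begin

text \<open>Infinite words are functions nat => 'a; position i (1-based in the paper)
  is stored at index i - 1, i.e. x 0 = a_1.\<close>

definition factor :: "(nat \<Rightarrow> 'a) \<Rightarrow> nat \<Rightarrow> nat \<Rightarrow> 'a list" where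
  "factor x i l = map (\<lambda>j. x (j - 1)) [i..<i + l]"

definition aligned_count :: "(nat \<Rightarrow> 'a) \<Rightarrow> nat \<Rightarrow> 'a list \<Rightarrow> nat" where
  "aligned_count x n u =
     card {i. 1 \<le> i \<and> i + length u - 1 \<le> n \<and> i mod length u = 1 mod length u
              \<and> factor x i (length u) = u}"

definition normal_word :: "'a set \<Rightarrow> (nat \<Rightarrow> 'a) \<Rightarrow> bool" where
  "normal_word A x \<longleftrightarrow> range x \<subseteq> A \<and>
     (\<forall>l\<ge>1. \<forall>u. length u = l \<and> set u \<subseteq> A \<longrightarrow>
        (\<lambda>n. real (aligned_count x n u) / (real n / real l))
          \<longlonglongrightarrow> 1 / real (card A) ^ l)"

text \<open>even(x) = a_2 a_4 a_6 ...; with 0-based storage, (even x) k = x (2k+1).\<close>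
definition even_word :: "(nat \<Rightarrow> 'a) \<Rightarrow> nat \<Rightarrow> 'a" where
  "even_word x k = x (2 * k + 1)"

end

theory Submission
  imports Defs "HOL-Library.FuncSet"
begin

text \<open>Let \<open>h (2^e * (2m + 1)) = m\<close> and put \<open>x_p = b (h p)\<close> for a 0-1 sequence \<open>b\<close>;
  then \<open>x_(2p) = x_p\<close> automatically. On each dyadic block \<open>[2^k, 2^(k+1))\<close> the map \<open>h\<close> is
  injective into \<open>[0, 2^k)\<close>, so for uniformly random bits \<open>b\<close> the occurrences of a word \<open>u\<close> at
  distinct aligned positions of a block are pairwise independent events of probability
  \<open>2^-|u|\<close>. By Chebyshev's inequality, at a block's equally spaced checkpoints every short word
  has nearly its expected number of aligned occurrences, except for a proportion of \<open>b\<close> that is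
  summable over the levels \<open>k\<close>. Hence some \<open>b\<close> is good on all levels up to any bound, and
  Koenig's lemma yields an infinite \<open>b\<close> good on every level. Adding up the errors over the dyadic
  blocks shows that the aligned counts of \<open>u\<close> in \<open>x[1..n]\<close> deviate from \<open>n / (|u| 2^|u|)\<close> by
  \<open>o(n)\<close>, which is normality.\<close>

section \<open>The odd-part index\<close>

text \<open>For \<open>p = 2^e * (2 * m + 1)\<close> this is \<open>m\<close>.\<close>
function odd_index :: "nat \<Rightarrow> nat" where
  "odd_index p = (if p = 0 \<or> odd p then (p - 1) div 2 else odd_index (p div 2))"
  by auto
termination by (relation "measure id") auto

declare odd_index.simps[simp del]

lemma odd_index_odd: "odd p \<Longrightarrow> odd_index p = (p - 1) div 2"
  by (subst odd_index.simps) auto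

lemma odd_index_even: "p > 0 \<Longrightarrow> even p \<Longrightarrow> odd_index p = odd_index (p div 2)"
  by (subst odd_index.simps) auto

lemma odd_index_double: "p > 0 \<Longrightarrow> odd_index (2 * p) = odd_index p"
  using odd_index_even[of "2 * p"] by simp

lemma odd_index_less:
  assumes "p \<in> {2^k..<2^Suc k}"
  shows "odd_index p < 2^k"
  using assms
proof (induction k arbitrary: p)
  case 0
  then have "p = 1" by simp
  then show ?case by (simp add: odd_index_odd)
next
  case (Suc k)
  show ?case
  proof (cases "odd p")
    case True
    from Suc.prems have "p - 1 < 2^Suc k * 2" by (simp add: less_imp_diff_less)
    with True show ?thesis by (simp add: odd_index_odd less_mult_imp_div_less)
  next
    case False
    with Suc.prems have "odd_index p = odd_index (p div 2)" "p div 2 \<in> {2^k..<2^Suc k}"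
      by (auto simp: odd_index_even)
    with Suc.IH[of "p div 2"] show ?thesis by simp
  qed
qed

lemma odd_index_odd_ge:
  assumes "odd p" "p \<in> {2^Suc k..<2^Suc (Suc k)}"
  shows "2^k \<le> odd_index p"
proof -
  have "2^Suc k \<noteq> p" using assms(1) by auto
  with assms have "2^Suc k + 1 \<le> p" by simp
  with assms show ?thesis by (simp add: odd_index_odd)
qed

lemma odd_index_even_less:
  assumes "even p" "p \<in> {2^Suc k..<2^Suc (Suc k)}"
  shows "odd_index p < 2^k"
proof -
  from assms have "odd_index p = odd_index (p div 2)" "p div 2 \<in> {2^k..<2^Suc k}"
    by (auto simp: odd_index_even)
  then show ?thesis using odd_index_less by simp
qed

lemma inj_on_odd_index: "inj_on odd_index {2^k..<2^Suc k}"
proof (induction k)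
  case 0
  have "{2^0..<2^Suc 0} = {1::nat}" by auto
  then show ?case by simp
next
  case (Suc k)
  show ?case
  proof (rule inj_onI)
    fix p q
    assume p: "p \<in> {2^Suc k..<2^Suc (Suc k)}" and q: "q \<in> {2^Suc k..<2^Suc (Suc k)}"
      and eq: "odd_index p = odd_index q"
    consider "odd p" "odd q" | "odd p \<noteq> odd q" | "even p" "even q" by blast
    then show "p = q"
    proof cases
      case 1
      with eq show ?thesis by (auto simp: odd_index_odd elim!: oddE)
    next
      case 2
      then show ?thesis
        using odd_index_odd_ge[OF _ p] odd_index_odd_ge[OF _ q]
          odd_index_even_less[OF _ p] odd_index_even_less[OF _ q] eq
        by (cases "odd p") auto
    next
      case 3
      from p q 3 have "p div 2 \<in> {2^k..<2^Suc k}" "q div 2 \<in> {2^k..<2^Suc k}" by auto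
      moreover from p q 3 eq have "odd_index (p div 2) = odd_index (q div 2)"
        by (simp add: odd_index_even)
      ultimately have "p div 2 = q div 2" using Suc.IH by (auto dest: inj_onD)
      with 3 show ?thesis by (metis dvd_mult_div_cancel)
    qed
  qed
qed

section \<open>Counting bit strings and second moments\<close>

lemma card_PiE_prescribed:
  assumes "finite I" "inj_on g P" "g ` P \<subseteq> I" "v ` P \<subseteq> A"
  shows "card {f \<in> PiE I (\<lambda>_. A). \<forall>p\<in>P. f (g p) = v p} = card A ^ (card I - card P)"
proof -
  define B where "B i = (if i \<in> g ` P then {v (the_inv_into P g i)} else A)" for i
  have B_iff: "f i \<in> B i \<longleftrightarrow> f i \<in> A \<and> (\<forall>p\<in>P. g p = i \<longrightarrow> f i = v p)" for f i
    using assms(2,4) by (auto simp: B_def the_inv_into_f_f inj_on_eq_iff)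
  have "{f \<in> PiE I (\<lambda>_. A). \<forall>p\<in>P. f (g p) = v p} = PiE I B"
    using assms(3) by (auto simp: PiE_iff B_iff extensional_def)
  moreover have "card (PiE I B) = card A ^ card (I - g ` P)"
    using assms(1) by (simp add: card_PiE B_def if_distrib[of card] prod.If_cases Diff_eq)
  moreover have "card (I - g ` P) = card I - card P"
    using assms(1-3) by (simp add: card_Diff_subset finite_subset card_image)
  ultimately show ?thesis by simp
qed

lemma card_abs_ge_mult_power2_le:
  fixes X :: "'a \<Rightarrow> real"
  assumes "finite \<Omega>" "t \<ge> 0"
  shows "real (card {\<omega>\<in>\<Omega>. t \<le> \<bar>X \<omega>\<bar>}) * t^2 \<le> (\<Sum>\<omega>\<in>\<Omega>. (X \<omega>)^2)"
proof -
  have "real (card {\<omega>\<in>\<Omega>. t \<le> \<bar>X \<omega>\<bar>}) * t^2 = (\<Sum>\<omega>\<in>{\<omega>\<in>\<Omega>. t \<le> \<bar>X \<omega>\<bar>}. t^2)"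
    by simp
  also have "\<dots> \<le> (\<Sum>\<omega>\<in>{\<omega>\<in>\<Omega>. t \<le> \<bar>X \<omega>\<bar>}. (X \<omega>)^2)"
    using assms(2) by (intro sum_mono) (simp add: abs_le_square_iff[symmetric])
  also have "\<dots> \<le> (\<Sum>\<omega>\<in>\<Omega>. (X \<omega>)^2)"
    using assms(1) by (intro sum_mono2) auto
  finally show ?thesis .
qed

lemma sum_card_incidences:
  assumes "finite \<Omega>" "finite J" "\<And>j. j \<in> J \<Longrightarrow> E j \<subseteq> \<Omega>"
  shows "(\<Sum>\<omega>\<in>\<Omega>. real (card {j\<in>J. \<omega> \<in> E j})) = (\<Sum>j\<in>J. real (card (E j)))"
proof -
  have "(\<Sum>\<omega>\<in>\<Omega>. real (card {j\<in>J. \<omega> \<in> E j})) = (\<Sum>\<omega>\<in>\<Omega>. \<Sum>j\<in>J. of_bool (\<omega> \<in> E j))"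
    using assms(2) by (simp add: Int_def conj_commute)
  also have "\<dots> = (\<Sum>j\<in>J. \<Sum>\<omega>\<in>\<Omega>. of_bool (\<omega> \<in> E j))"
    by (rule sum.swap)
  also have "\<dots> = (\<Sum>j\<in>J. real (card (E j)))"
    using assms by (intro sum.cong) (auto simp: Int_absorb1)
  finally show ?thesis .
qed

lemma sum_card_incidences_power2:
  assumes "finite \<Omega>" "finite J" "\<And>j. j \<in> J \<Longrightarrow> E j \<subseteq> \<Omega>"
  shows "(\<Sum>\<omega>\<in>\<Omega>. real (card {j\<in>J. \<omega> \<in> E j})^2) = (\<Sum>j\<in>J. \<Sum>j'\<in>J. real (card (E j \<inter> E j')))"
proof -
  have "real (card {j\<in>J. \<omega> \<in> E j})^2 = (\<Sum>j\<in>J. \<Sum>j'\<in>J. of_bool (\<omega> \<in> E j \<inter> E j'))" for \<omega>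
  proof -
    have "real (card {j\<in>J. \<omega> \<in> E j}) = (\<Sum>j\<in>J. of_bool (\<omega> \<in> E j))"
      using assms(2) by (simp add: Int_def conj_commute)
    then show ?thesis by (simp add: power2_eq_square sum_product of_bool_conj)
  qed
  then have "(\<Sum>\<omega>\<in>\<Omega>. real (card {j\<in>J. \<omega> \<in> E j})^2)
      = (\<Sum>j\<in>J. \<Sum>j'\<in>J. \<Sum>\<omega>\<in>\<Omega>. of_bool (\<omega> \<in> E j \<inter> E j'))"
    by (simp add: sum.swap[of _ \<Omega>] sum.swap[of _ \<Omega> J])
  also have "\<dots> = (\<Sum>j\<in>J. \<Sum>j'\<in>J. real (card (E j \<inter> E j')))"
  proof (intro sum.cong refl)
    fix j j' assume "j \<in> J" "j' \<in> J"
    then have "\<Omega> \<inter> {\<omega>. \<omega> \<in> E j \<inter> E j'} = E j \<inter> E j'"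
      using assms(3) by blast
    then show "(\<Sum>\<omega>\<in>\<Omega>. of_bool (\<omega> \<in> E j \<inter> E j')) = real (card (E j \<inter> E j'))"
      using assms(1) by (simp only: sum_of_bool_eq)
  qed
  finally show ?thesis .
qed

lemma sum_card_incidences_deviation_power2:
  fixes p :: real
  assumes "finite \<Omega>" "finite J" "\<And>j. j \<in> J \<Longrightarrow> E j \<subseteq> \<Omega>"
    and card_E: "\<And>j. j \<in> J \<Longrightarrow> real (card (E j)) = p * card \<Omega>"
    and card_E2: "\<And>j j'. j \<in> J \<Longrightarrow> j' \<in> J \<Longrightarrow> j \<noteq> j' \<Longrightarrow> real (card (E j \<inter> E j')) = p^2 * card \<Omega>"
  shows "(\<Sum>\<omega>\<in>\<Omega>. (real (card {j\<in>J. \<omega> \<in> E j}) - card J * p)^2) = card J * p * (1 - p) * card \<Omega>"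
proof -
  define m where "m = real (card J)"
  define N where "N \<omega> = real (card {j\<in>J. \<omega> \<in> E j})" for \<omega>
  have row: "(\<Sum>j'\<in>J. real (card (E j \<inter> E j'))) = p * card \<Omega> + (m - 1) * p^2 * card \<Omega>"
    if "j \<in> J" for j
  proof -
    have "(\<Sum>j'\<in>J. real (card (E j \<inter> E j')))
        = real (card (E j)) + (\<Sum>j'\<in>J - {j}. real (card (E j \<inter> E j')))"
      using that assms(2) by (simp add: sum.remove)
    also have "(\<Sum>j'\<in>J - {j}. real (card (E j \<inter> E j'))) = (\<Sum>j'\<in>J - {j}. p^2 * card \<Omega>)"
      using that card_E2 by (intro sum.cong) auto
    moreover have "1 \<le> card J"
      using that assms(2) by (metis One_nat_def Suc_leI card_gt_0_iff empty_iff)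
    ultimately show ?thesis
      using that assms(2) card_E by (simp add: m_def card_Diff_singleton of_nat_diff)
  qed
  have sum1: "(\<Sum>\<omega>\<in>\<Omega>. N \<omega>) = m * p * card \<Omega>"
    using sum_card_incidences[OF assms(1-3)] card_E by (simp add: N_def m_def)
  have "(\<Sum>j\<in>J. \<Sum>j'\<in>J. real (card (E j \<inter> E j')))
      = (\<Sum>j\<in>J. p * card \<Omega> + (m - 1) * p^2 * card \<Omega>)"
    using row by (rule sum.cong[OF refl])
  then have sum2: "(\<Sum>\<omega>\<in>\<Omega>. N \<omega>^2) = m * (p * card \<Omega> + (m - 1) * p^2 * card \<Omega>)"
    using sum_card_incidences_power2[OF assms(1-3)] by (simp only: N_def m_def sum_constant)
  have "(\<Sum>\<omega>\<in>\<Omega>. (N \<omega> - m * p)^2)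
      = (\<Sum>\<omega>\<in>\<Omega>. N \<omega>^2) - 2 * m * p * (\<Sum>\<omega>\<in>\<Omega>. N \<omega>) + (m * p)^2 * card \<Omega>"
    by (simp add: power2_diff sum.distrib sum_subtractf sum_distrib_left sum_distrib_right
        algebra_simps)
  also have "\<dots> = m * p * (1 - p) * card \<Omega>"
    unfolding sum1 sum2 by (simp add: algebra_simps power2_eq_square)
  finally show ?thesis
    by (simp add: N_def m_def)
qed

text \<open>Chebyshev's inequality for the number of pairwise independent events of common
  probability \<open>p\<close> that contain \<open>\<omega>\<close>, for \<open>\<omega>\<close> uniform on \<open>\<Omega>\<close>.\<close>
lemma card_deviation_pairwise_independent:
  fixes p t :: real
  assumes "finite \<Omega>" "finite J" "\<And>j. j \<in> J \<Longrightarrow> E j \<subseteq> \<Omega>"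
    and "\<And>j. j \<in> J \<Longrightarrow> real (card (E j)) = p * card \<Omega>"
    and "\<And>j j'. j \<in> J \<Longrightarrow> j' \<in> J \<Longrightarrow> j \<noteq> j' \<Longrightarrow> real (card (E j \<inter> E j')) = p^2 * card \<Omega>"
    and "0 \<le> p" "p \<le> 1" "t \<ge> 0"
  shows "real (card {\<omega>\<in>\<Omega>. t \<le> \<bar>real (card {j\<in>J. \<omega> \<in> E j}) - card J * p\<bar>}) * t^2
    \<le> real (card J) * card \<Omega>"
proof -
  have "p * (1 - p) \<le> 1"
    using assms(6,7) by (intro mult_le_one) auto
  then have "real (card J) * p * (1 - p) * card \<Omega> \<le> real (card J) * card \<Omega>"
    using mult_left_mono[of "p * (1 - p)" 1 "real (card J) * card \<Omega>"] by (simp add: algebra_simps)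
  then show ?thesis
    using card_abs_ge_mult_power2_le[OF assms(1,8), of "\<lambda>\<omega>. real (card {j\<in>J. \<omega> \<in> E j}) - card J * p"]
      sum_card_incidences_deviation_power2[OF assms(1-5)] by simp
qed

section \<open>Occurrences in a random dyadic block\<close>

definition bit_strings :: "nat \<Rightarrow> (nat \<Rightarrow> nat) set" where
  "bit_strings K = PiE {..<2^K} (\<lambda>_. {0, 1})"

text \<open>\<open>u\<close> occurs at the (1-based) position \<open>i\<close> of the word whose \<open>p\<close>-th letter is
  \<open>b (odd_index p)\<close>.\<close>
definition occurs_at :: "(nat \<Rightarrow> nat) \<Rightarrow> nat list \<Rightarrow> nat \<Rightarrow> bool" where
  "occurs_at b u i \<longleftrightarrow> (\<forall>q<length u. b (odd_index (i + q)) = u ! q)"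

definition aligned_in_block :: "nat \<Rightarrow> nat \<Rightarrow> nat \<Rightarrow> nat set" where
  "aligned_in_block k l c = {i. 2^k \<le> i \<and> i + l \<le> c \<and> i mod l = 1 mod l}"

definition block_count :: "(nat \<Rightarrow> nat) \<Rightarrow> nat list \<Rightarrow> nat \<Rightarrow> nat \<Rightarrow> nat" where
  "block_count b u k c = card {i \<in> aligned_in_block k (length u) c. occurs_at b u i}"

definition block_deviation :: "(nat \<Rightarrow> nat) \<Rightarrow> nat list \<Rightarrow> nat \<Rightarrow> nat \<Rightarrow> real" where
  "block_deviation b u k c =
     real (block_count b u k c) - real (card (aligned_in_block k (length u) c)) / 2^length u"

lemma finite_bit_strings: "finite (bit_strings K)"
  by (simp add: bit_strings_def finite_PiE)

lemma card_bit_strings: "card (bit_strings K) = 2^2^K"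
  by (simp add: bit_strings_def card_PiE numeral_2_eq_2)

lemma finite_aligned_in_block: "finite (aligned_in_block k l c)"
  by (rule finite_subset[of _ "{..c}"]) (auto simp: aligned_in_block_def)

lemma mod_eq_less_imp_add_le:
  fixes i i' l :: nat
  assumes "i mod l = i' mod l" "i < i'"
  shows "i + l \<le> i'"
proof -
  from assms obtain m where m: "i' - i = l * m"
    using mod_eq_dvd_iff_nat[of i i' l] by (auto elim!: dvdE)
  with assms(2) have "m \<noteq> 0" by (cases "m = 0") auto
  then have "l \<le> i' - i"
    unfolding m by simp
  with assms(2) show ?thesis by linarith
qed

lemma all_less_shift_iff: "(\<forall>q<l. Q (i + q)) \<longleftrightarrow> (\<forall>p\<in>{i..<i + l}. Q (p::nat))"
proof
  assume Q: "\<forall>q<l. Q (i + q)"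
  show "\<forall>p\<in>{i..<i + l}. Q p"
  proof
    fix p assume "p \<in> {i..<i + l}"
    then have "p = i + (p - i)" "p - i < l" by auto
    with Q show "Q p" by metis
  qed
qed auto

text \<open>Since \<open>i \<equiv> 1 (mod l)\<close>, the letter required at \<open>p\<close> depends on \<open>p\<close> only, so that the
  conditions for two aligned occurrences combine into one condition on a union of windows.\<close>
lemma occurs_at_iff_window:
  assumes "i mod l = 1 mod l" "1 \<le> i" "length u = l"
  shows "occurs_at b u i \<longleftrightarrow> (\<forall>p\<in>{i..<i + l}. b (odd_index p) = u ! ((p - 1) mod l))"
proof -
  from assms(1,2) have "l dvd i - 1"
    using mod_eq_dvd_iff_nat[of 1 i l] by simp
  then obtain d where d: "i - 1 = l * d" ..
  have "(i + q - 1) mod l = q" if "q < l" for q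
  proof -
    have "i + q - 1 = q + l * d"
      using d assms(2) by simp
    with that show ?thesis by simp
  qed
  then show ?thesis
    using assms(3) all_less_shift_iff[of l "\<lambda>p. b (odd_index p) = u ! ((p - 1) mod l)" i]
    by (simp add: occurs_at_def)
qed

lemma card_bit_strings_prescribed:
  assumes "P \<subseteq> {2^k..<2^Suc k}" "k \<le> K" "v ` P \<subseteq> {0, 1}"
  shows "real (card {f \<in> bit_strings K. \<forall>p\<in>P. f (odd_index p) = v p}) = (1/2)^card P * 2^2^K"
proof -
  have inj: "inj_on odd_index P"
    using inj_on_odd_index assms(1) by (rule inj_on_subset)
  have "odd_index ` P \<subseteq> {..<2^k}"
    using assms(1) odd_index_less by auto
  also have "\<dots> \<subseteq> {..<2^K}"
    using assms(2) by simp
  finally have sub: "odd_index ` P \<subseteq> {..<2^K}" .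
  have "card P \<le> 2^K"
    using card_mono[OF _ sub] card_image[OF inj] by simp
  have "card {f \<in> bit_strings K. \<forall>p\<in>P. f (odd_index p) = v p} = 2^(2^K - card P)"
    using card_PiE_prescribed[OF _ inj sub assms(3)] by (simp add: bit_strings_def numeral_2_eq_2)
  then have "real (card {f \<in> bit_strings K. \<forall>p\<in>P. f (odd_index p) = v p}) = 2^(2^K - card P)"
    by simp
  also have "\<dots> = 2^2^K / 2^card P"
    using \<open>card P \<le> 2^K\<close> by (simp add: power_diff)
  finally show ?thesis
    by (simp add: power_one_over)
qed

lemma occurs_at_in_block_iff:
  assumes "i \<in> aligned_in_block k (length u) c"
  shows "occurs_at b u i \<longleftrightarrow>
    (\<forall>p\<in>{i..<i + length u}. b (odd_index p) = u ! ((p - 1) mod length u))"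
proof -
  have "2^k \<le> i"
    using assms by (simp add: aligned_in_block_def)
  then have "1 \<le> i"
    using one_le_power[of "2::nat" k] by linarith
  with assms show ?thesis
    by (intro occurs_at_iff_window) (simp_all add: aligned_in_block_def)
qed

lemma window_subset_block:
  assumes "i \<in> aligned_in_block k l c" "c \<le> 2^Suc k"
  shows "{i..<i + l} \<subseteq> {2^k..<2^Suc k}"
  using assms by (auto simp: aligned_in_block_def)

lemma cyclic_letters_subset:
  assumes "set u \<subseteq> {0, 1}" "u \<noteq> []"
  shows "(\<lambda>p. u ! ((p - 1) mod length u)) ` P \<subseteq> {0, 1}"
proof -
  have "u ! ((p - 1) mod length u) \<in> set u" for p
    using assms(2) by simp
  with assms(1) show ?thesis
    by blast
qed

lemma card_occurs_at:
  assumes "i \<in> aligned_in_block k (length u) c" "c \<le> 2^Suc k" "k \<le> K"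
    and "set u \<subseteq> {0, 1}" "u \<noteq> []"
  shows "real (card {f \<in> bit_strings K. occurs_at f u i}) = (1/2)^length u * 2^2^K"
  using card_bit_strings_prescribed[OF window_subset_block[OF assms(1,2)] assms(3)
      cyclic_letters_subset[OF assms(4,5)]] occurs_at_in_block_iff[OF assms(1)]
  by simp

lemma card_occurs_at_both:
  assumes "i \<in> aligned_in_block k (length u) c" "i' \<in> aligned_in_block k (length u) c" "i \<noteq> i'"
    and "c \<le> 2^Suc k" "k \<le> K" "set u \<subseteq> {0, 1}" "u \<noteq> []"
  shows "real (card {f \<in> bit_strings K. occurs_at f u i \<and> occurs_at f u i'})
    = ((1/2)^length u)^2 * 2^2^K"
proof -
  define l where "l = length u"
  have "i + l \<le> i' \<or> i' + l \<le> i"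
    using assms(1-3) mod_eq_less_imp_add_le[of i l i'] mod_eq_less_imp_add_le[of i' l i]
    by (cases "i < i'") (auto simp: aligned_in_block_def l_def)
  then have "card ({i..<i + l} \<union> {i'..<i' + l}) = 2 * l"
    by (subst card_Un_disjoint) auto
  moreover have "{i..<i + l} \<union> {i'..<i' + l} \<subseteq> {2^k..<2^Suc k}"
    using window_subset_block[OF assms(1,4)] window_subset_block[OF assms(2,4)] by (simp add: l_def)
  moreover have "{f \<in> bit_strings K. occurs_at f u i \<and> occurs_at f u i'} =
      {f \<in> bit_strings K. \<forall>p\<in>{i..<i + l} \<union> {i'..<i' + l}. f (odd_index p) = u ! ((p - 1) mod l)}"
    using occurs_at_in_block_iff[OF assms(1)] occurs_at_in_block_iff[OF assms(2)] by (auto simp: l_def)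
  ultimately show ?thesis
    using card_bit_strings_prescribed[OF _ assms(5) cyclic_letters_subset[OF assms(6,7)]]
    by (simp add: l_def power_mult power2_eq_square flip: power_mult_distrib)
qed

lemma card_block_deviation_ge:
  fixes t :: real
  assumes "k \<le> K" "set u \<subseteq> {0, 1}" "u \<noteq> []" "c \<le> 2^Suc k" "t \<ge> 0"
  shows "real (card {f \<in> bit_strings K. t \<le> \<bar>block_deviation f u k c\<bar>}) * t^2
    \<le> real (card (aligned_in_block k (length u) c)) * 2^2^K"
proof -
  define J where "J = aligned_in_block k (length u) c"
  define E where "E i = {f \<in> bit_strings K. occurs_at f u i}" for i
  have "real (card {f \<in> bit_strings K.
      t \<le> \<bar>real (card {i \<in> J. f \<in> E i}) - card J * (1/2)^length u\<bar>}) * t^2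
    \<le> real (card J) * card (bit_strings K)"
  proof (rule card_deviation_pairwise_independent[OF finite_bit_strings])
    show "real (card (E i)) = (1/2)^length u * card (bit_strings K)" if "i \<in> J" for i
      using card_occurs_at[OF _ assms(4,1-3)] that by (simp add: J_def E_def card_bit_strings)
    show "real (card (E i \<inter> E i')) = ((1/2)^length u)^2 * card (bit_strings K)"
      if "i \<in> J" "i' \<in> J" "i \<noteq> i'" for i i'
    proof -
      have "E i \<inter> E i' = {f \<in> bit_strings K. occurs_at f u i \<and> occurs_at f u i'}"
        by (auto simp: E_def)
      with card_occurs_at_both[OF _ _ _ assms(4,1-3)] that show ?thesis
        by (simp add: J_def card_bit_strings)
    qed
  qed (auto simp: J_def E_def finite_aligned_in_block power_le_one assms(5))
  moreover have "{i \<in> J. f \<in> E i} = {i \<in> aligned_in_block k (length u) c. occurs_at f u i}"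
    if "f \<in> bit_strings K" for f
    using that by (auto simp: E_def J_def)
  ultimately show ?thesis
    by (simp add: block_count_def block_deviation_def power_one_over J_def card_bit_strings
        cong: conj_cong)
qed

section \<open>Good levels\<close>

text \<open>With \<open>r = test_depth k\<close> there are at most \<open>2^(3r+1)\<close> tests at level \<open>k\<close>, each failing
  for a proportion at most \<open>2^k / 2^(2(k-r))\<close> of the bit strings; \<open>r \<approx> k/16\<close> makes the total
  at most \<open>2^-(k div 2 + 3)\<close>, summable over \<open>k\<close>.\<close>
definition test_depth :: "nat \<Rightarrow> nat" where
  "test_depth k = k div 16 - 8"

definition checkpoint :: "nat \<Rightarrow> nat \<Rightarrow> nat" where
  "checkpoint k j = 2^k + j * 2^(k - test_depth k)"

definition test_words :: "nat \<Rightarrow> nat list set" where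
  "test_words r = {u. set u \<subseteq> {0, 1} \<and> 1 \<le> length u \<and> length u \<le> r}"

definition tests :: "nat \<Rightarrow> (nat list \<times> nat) set" where
  "tests k = test_words (test_depth k) \<times> {..2^test_depth k}"

definition good_level :: "nat \<Rightarrow> (nat \<Rightarrow> nat) \<Rightarrow> bool" where
  "good_level k b \<longleftrightarrow> (\<forall>u j. (u, j) \<in> tests k \<longrightarrow>
     \<bar>block_deviation b u k (checkpoint k j)\<bar> < 2^(k - test_depth k))"

lemma test_depth_le: "test_depth k \<le> k"
  by (simp add: test_depth_def)

lemma checkpoint_le:
  assumes "j \<le> 2^test_depth k"
  shows "checkpoint k j \<le> 2^Suc k"
proof -
  have "j * 2^(k - test_depth k) \<le> 2^test_depth k * 2^(k - test_depth k)"
    using assms by simp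
  also have "\<dots> = 2^k"
    using test_depth_le[of k] by (simp flip: power_add)
  finally show ?thesis by (simp add: checkpoint_def)
qed

lemma card_aligned_in_block_le:
  assumes "c \<le> 2^Suc k" "1 \<le> l"
  shows "card (aligned_in_block k l c) \<le> 2^k"
proof -
  have "aligned_in_block k l c \<subseteq> {2^k..<2^Suc k}"
    using assms by (auto simp: aligned_in_block_def)
  then have "card (aligned_in_block k l c) \<le> card {2^k..<2^Suc k::nat}"
    by (rule card_mono[rotated]) simp
  then show ?thesis
    by simp
qed

lemma finite_tests: "finite (tests k)"
proof -
  have "test_words (test_depth k) \<subseteq> {u. set u \<subseteq> {0, 1} \<and> length u \<le> test_depth k}"
    by (auto simp: test_words_def)
  then have "finite (test_words (test_depth k))"
    by (rule finite_subset) (simp add: finite_lists_length_le)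
  then show ?thesis
    by (simp add: tests_def)
qed

lemma card_test_words_le: "card (test_words r) \<le> 2^r * 2^r"
proof -
  define W where "W l = {u. set u \<subseteq> {0, 1::nat} \<and> length u = l}" for l
  have card_W: "card (W l) = 2^l" for l
    using card_lists_length_eq[of "{0, 1::nat}" l] by (simp add: W_def numeral_2_eq_2)
  have "test_words r = (\<Union>l\<in>{1..r}. W l)"
    by (auto simp: W_def test_words_def)
  then have "card (test_words r) \<le> (\<Sum>l=1..r. 2^l)"
    using card_UN_le[of "{1..r}" W] by (simp add: card_W)
  also have "\<dots> \<le> (\<Sum>l=1..r. 2^r)"
    by (intro sum_mono) simp
  also have "\<dots> \<le> 2^r * 2^r"
    using less_exp[of r] by simp
  finally show ?thesis .
qed

lemma card_tests_le: "card (tests k) \<le> 2^(3 * test_depth k + 1)"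
proof -
  define r where "r = test_depth k"
  have "card (tests k) = card (test_words r) * card {..(2::nat)^r}"
    by (simp add: tests_def r_def card_cartesian_product)
  also have "\<dots> \<le> (2^r * 2^r) * 2^(r + 1)"
    using card_test_words_le by (intro mult_le_mono) simp_all
  also have "\<dots> = 2^(3 * test_depth k + 1)"
    by (simp add: r_def numeral_3_eq_3 algebra_simps flip: power_add)
  finally show ?thesis .
qed

lemma test_depth_power_bound:
  assumes "test_depth k \<noteq> 0"
  shows "(2::real)^(3 * test_depth k + 1) * 2^k / (2^(k - test_depth k))^2 \<le> (1/2)^(k div 2 + 3)"
proof -
  define r where "r = test_depth k"
  have "r + 8 = k div 16"
    using assms by (simp add: r_def test_depth_def)
  then have "(3 * r + 1 + k) + (k div 2 + 3) \<le> (k - r) * 2"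
    by linarith
  then have exp_le: "(2::real)^(3 * r + 1 + k) * 2^(k div 2 + 3) \<le> (2^(k - r))^2"
    unfolding power_add[symmetric] power_mult[symmetric] by (rule power_increasing) simp
  have "(2::real)^(3 * r + 1) * 2^k / (2^(k - r))^2
      = ((2^(3 * r + 1 + k) * 2^(k div 2 + 3)) / (2^(k - r))^2) * (1/2)^(k div 2 + 3)"
    by (simp add: power_add power_one_over)
  also have "\<dots> \<le> 1 * (1/2)^(k div 2 + 3)"
    using exp_le by (intro mult_right_mono) simp_all
  finally show ?thesis
    by (simp add: r_def)
qed

lemma card_failing_test_le:
  fixes t :: real
  assumes "k \<le> K" "(u, j) \<in> tests k" "0 < t"
  shows "real (card {f \<in> bit_strings K. t \<le> \<bar>block_deviation f u k (checkpoint k j)\<bar>})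
    \<le> 2^k * 2^2^K / t^2"
proof -
  from assms(2) have u: "set u \<subseteq> {0, 1}" "u \<noteq> []" and j: "j \<le> 2^test_depth k"
    by (auto simp: tests_def test_words_def)
  from j have c: "checkpoint k j \<le> 2^Suc k"
    by (rule checkpoint_le)
  have "real (card {f \<in> bit_strings K. t \<le> \<bar>block_deviation f u k (checkpoint k j)\<bar>}) * t^2
      \<le> real (card (aligned_in_block k (length u) (checkpoint k j))) * 2^2^K"
    using card_block_deviation_ge[OF assms(1) u c] assms(3) by simp
  also have "\<dots> \<le> 2^k * 2^2^K"
    using card_aligned_in_block_le[OF c, of "length u"] u(2) by (simp add: Suc_le_eq del: power_Suc)
  finally show ?thesis
    using assms(3) by (simp add: field_simps)
qed

lemma card_not_good_level_le:
  assumes "k \<le> K"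
  shows "real (card {f \<in> bit_strings K. \<not> good_level k f}) \<le> (1/2)^(k div 2 + 3) * 2^2^K"
proof (cases "test_depth k = 0")
  case True
  then have "tests k = {}"
    by (simp add: tests_def test_words_def)
  then show ?thesis
    by (simp add: good_level_def)
next
  case False
  define t :: real where "t = 2^(k - test_depth k)"
  define bad where "bad u j = {f \<in> bit_strings K. t \<le> \<bar>block_deviation f u k (checkpoint k j)\<bar>}"
    for u j
  have "{f \<in> bit_strings K. \<not> good_level k f} \<subseteq> (\<Union>(u, j)\<in>tests k. bad u j)"
    by (auto simp: good_level_def bad_def t_def not_less)
  then have "card {f \<in> bit_strings K. \<not> good_level k f} \<le> card (\<Union>(u, j)\<in>tests k. bad u j)"
    by (intro card_mono) (auto simp: bad_def finite_tests finite_bit_strings)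
  then have "real (card {f \<in> bit_strings K. \<not> good_level k f}) \<le> (\<Sum>(u, j)\<in>tests k. real (card (bad u j)))"
    using card_UN_le[OF finite_tests, of "\<lambda>(u, j). bad u j" k]
    by (simp add: case_prod_unfold flip: of_nat_sum)
  also have "\<dots> \<le> card (tests k) * (2^k * 2^2^K / t^2)"
    using sum_mono[of "tests k" "\<lambda>(u, j). real (card (bad u j))"]
      card_failing_test_le[OF assms _ , of _ _ t] by (fastforce simp: bad_def t_def)
  also have "\<dots> \<le> 2^(3 * test_depth k + 1) * (2^k * 2^2^K / t^2)"
    using of_nat_le_iff[where 'a = real, THEN iffD2, OF card_tests_le[of k]]
    by (intro mult_right_mono) simp_all
  also have "\<dots> = (2^(3 * test_depth k + 1) * 2^k / t^2) * 2^2^K"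
    by simp
  also have "\<dots> \<le> (1/2)^(k div 2 + 3) * 2^2^K"
    using test_depth_power_bound[OF False] unfolding t_def by (intro mult_right_mono) simp_all
  finally show ?thesis .
qed

lemma sum_half_power_div2_le: "(\<Sum>k<m. (1/2::real)^(k div 2)) \<le> 4"
proof -
  have pairs: "(\<Sum>k<2 * n. (1/2::real)^(k div 2)) = 4 - 4 * (1/2)^n" for n
    by (induction n) (simp_all add: field_simps)
  have "(\<Sum>k<m. (1/2::real)^(k div 2)) \<le> (\<Sum>k<2 * m. (1/2::real)^(k div 2))"
    by (rule sum_mono2) auto
  also have "\<dots> \<le> 4"
    unfolding pairs by simp
  finally show ?thesis .
qed

lemma ex_good_levels_up_to: "\<exists>f\<in>bit_strings K. \<forall>k\<le>K. good_level k f"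
proof (rule ccontr)
  assume "\<not> ?thesis"
  then have "bit_strings K = (\<Union>k\<le>K. {f \<in> bit_strings K. \<not> good_level k f})"
    by auto
  then have "real (card (bit_strings K)) \<le> (\<Sum>k\<le>K. real (card {f \<in> bit_strings K. \<not> good_level k f}))"
    using card_UN_le[of "{..K}" "\<lambda>k. {f \<in> bit_strings K. \<not> good_level k f}"]
    by (simp flip: of_nat_sum)
  also have "\<dots> \<le> (\<Sum>k\<le>K. (1/8 * 2^2^K) * (1/2)^(k div 2))"
  proof (intro sum_mono)
    fix k assume "k \<in> {..K}"
    then have "real (card {f \<in> bit_strings K. \<not> good_level k f}) \<le> (1/2)^(k div 2 + 3) * 2^2^K"
      using card_not_good_level_le by simp
    then show "real (card {f \<in> bit_strings K. \<not> good_level k f}) \<le> (1/8 * 2^2^K) * (1/2)^(k div 2)"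
      by (simp add: power_add power_one_over)
  qed
  also have "\<dots> = (1/8 * 2^2^K) * (\<Sum>k<Suc K. (1/2)^(k div 2))"
    by (simp add: sum_distrib_left lessThan_Suc_atMost)
  also have "\<dots> \<le> (1/8 * 2^2^K) * 4"
    by (intro mult_left_mono sum_half_power_div2_le) simp
  finally show False
    by (simp add: card_bit_strings)
qed

section \<open>An infinite sequence good on every level\<close>

lemma block_deviation_cong:
  assumes "c \<le> 2^Suc k" "\<forall>i<2^k. b i = b' i"
  shows "block_deviation b u k c = block_deviation b' u k c"
proof -
  have "occurs_at b u i = occurs_at b' u i" if "i \<in> aligned_in_block k (length u) c" for i
  proof -
    have "odd_index (i + q) < 2^k" if "q < length u" for q
      using odd_index_less[of "i + q" k] \<open>i \<in> aligned_in_block k (length u) c\<close> assms(1) that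
      by (simp add: aligned_in_block_def)
    then show ?thesis
      using assms(2) by (simp add: occurs_at_def)
  qed
  then show ?thesis
    unfolding block_deviation_def block_count_def by (metis (no_types, lifting) Collect_cong)
qed

lemma good_level_cong:
  assumes "\<forall>i<2^k. b i = b' i"
  shows "good_level k b = good_level k b'"
  using block_deviation_cong[OF checkpoint_le assms]
  by (simp add: good_level_def tests_def)

definition good_strings :: "nat \<Rightarrow> (nat \<Rightarrow> nat) set" where
  "good_strings K = {f \<in> bit_strings K. \<forall>k\<le>K. good_level k f}"

lemma restrict_good_strings:
  assumes "g \<in> good_strings K'" "K \<le> K'"
  shows "restrict g {..<2^K} \<in> good_strings K"
proof -
  have "g i \<in> {0, 1}" if "i < 2^K" for i
  proof -
    have "(2::nat)^K \<le> 2^K'"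
      using assms(2) by simp
    with that have "i < 2^K'"
      by linarith
    with assms(1) show ?thesis
      by (auto simp: good_strings_def bit_strings_def PiE_iff)
  qed
  then have "restrict g {..<2^K} \<in> bit_strings K"
    by (auto simp: bit_strings_def PiE_iff)
  moreover have "good_level k (restrict g {..<2^K})" if "k \<le> K" for k
  proof -
    have "(2::nat)^k \<le> 2^K"
      using that by simp
    then have "\<forall>i<2^k. g i = restrict g {..<2^K} i"
      by (metis less_le_trans restrict_apply' lessThan_iff)
    with assms that show ?thesis
      using good_level_cong[of k g] by (simp add: good_strings_def)
  qed
  ultimately show ?thesis
    by (simp add: good_strings_def)
qed

definition extendable :: "nat \<Rightarrow> (nat \<Rightarrow> nat) \<Rightarrow> bool" where
  "extendable d f \<longleftrightarrow> (\<forall>K. d \<le> 2^K \<longrightarrow> (\<exists>g\<in>good_strings K. \<forall>i<d. g i = f i))"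

lemma extendable_0: "extendable 0 f"
  using ex_good_levels_up_to by (auto simp: extendable_def good_strings_def)

text \<open>Koenig's lemma, using that a prefix has only finitely many extensions to length \<open>2^K\<close>.\<close>
lemma extendable_extend:
  assumes "extendable d f" "d \<le> 2^K"
  shows "\<exists>f'\<in>bit_strings K. (\<forall>i<d. f' i = f i) \<and> extendable (2^K) f'"
proof (rule ccontr)
  define S where "S = {f' \<in> bit_strings K. \<forall>i<d. f' i = f i}"
  assume "\<not> ?thesis"
  then have "\<forall>f'\<in>S. \<exists>K'. 2^K \<le> (2::nat)^K' \<and> \<not> (\<exists>g\<in>good_strings K'. \<forall>i<2^K. g i = f' i)"
    by (auto simp: S_def extendable_def)
  then obtain M where M: "\<And>f'. f' \<in> S \<Longrightarrow>
      2^K \<le> (2::nat)^M f' \<and> \<not> (\<exists>g\<in>good_strings (M f'). \<forall>i<2^K. g i = f' i)"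
    by metis
  define N where "N = Max (insert K (M ` S))"
  have finite: "finite (insert K (M ` S))"
    by (simp add: S_def finite_bit_strings)
  then have "K \<le> N"
    by (simp add: N_def)
  then have "d \<le> 2^N"
    using assms(2) by (meson order_trans one_le_numeral power_increasing)
  then obtain g where g: "g \<in> good_strings N" "\<forall>i<d. g i = f i"
    using assms(1) by (auto simp: extendable_def)
  define f' where "f' = restrict g {..<2^K}"
  have "f' \<in> good_strings K"
    unfolding f'_def using g(1) \<open>K \<le> N\<close> by (rule restrict_good_strings)
  then have f': "f' \<in> S"
    using g(2) assms(2) by (auto simp: S_def f'_def good_strings_def)
  then have "M f' \<le> N"
    using finite by (simp add: N_def)
  with g(1) have "restrict g {..<2^M f'} \<in> good_strings (M f')"
    by (rule restrict_good_strings)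
  moreover have "\<forall>i<2^K. restrict g {..<2^M f'} i = f' i"
    using M[OF f'] unfolding f'_def by (metis less_le_trans restrict_apply' lessThan_iff)
  ultimately show False
    using M[OF f'] by blast
qed

lemma ex_extendable_chain:
  "\<exists>F. \<forall>K. (F K \<in> bit_strings K \<and> extendable (2^K) (F K)) \<and> (\<forall>i<2^K. F (Suc K) i = F K i)"
proof (rule dependent_nat_choice[of "\<lambda>K f. f \<in> bit_strings K \<and> extendable (2^K) f"
      "\<lambda>K f f'. \<forall>i<2^K. f' i = f i"])
  show "\<exists>f. f \<in> bit_strings 0 \<and> extendable (2^0) f"
    using extendable_extend[OF extendable_0, of 0] by auto
next
  fix f K
  assume "f \<in> bit_strings K \<and> extendable (2^K) f"
  then show "\<exists>f'. (f' \<in> bit_strings (Suc K) \<and> extendable (2^Suc K) f') \<and> (\<forall>i<2^K. f' i = f i)"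
    using extendable_extend[of "2^K" f "Suc K"] by auto
qed

lemma ex_good_sequence: "\<exists>b. range b \<subseteq> {0, 1} \<and> (\<forall>k. good_level k b)"
proof -
  obtain F where F: "\<And>K. F K \<in> bit_strings K \<and> extendable (2^K) (F K)"
    and F_Suc: "\<And>K. \<forall>i<2^K. F (Suc K) i = F K i"
    using ex_extendable_chain by blast
  have F_mono: "F K' i = F K i" if "K \<le> K'" "i < 2^K" for K K' i
    using that(1)
  proof (induction K' rule: dec_induct)
    case (step K')
    with that(2) show ?case
      using F_Suc[of K'] by (metis less_le_trans one_le_numeral power_increasing)
  qed simp
  define b where "b i = F i i" for i
  have b_eq: "b i = F K i" if "i < 2^K" for i K
    using F_mono[of i K i] F_mono[of K i i] that less_exp[of i]
    by (cases "i \<le> K") (auto simp: b_def)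
  have "b i \<in> {0, 1}" for i
    using F[of i] less_exp[of i] by (auto simp: b_def bit_strings_def PiE_iff)
  then have "range b \<subseteq> {0, 1}"
    by (simp add: image_subset_iff)
  moreover have "good_level k b" for k
  proof -
    obtain g where "g \<in> good_strings k" "\<forall>i<2^k. g i = F k i"
      using F[of k] by (auto simp: extendable_def)
    then show ?thesis
      using good_level_cong[of k g b] b_eq by (simp add: good_strings_def)
  qed
  ultimately show ?thesis
    by blast
qed

section \<open>Discrepancy of aligned counts\<close>

definition aligned_upto :: "nat \<Rightarrow> nat \<Rightarrow> nat set" where
  "aligned_upto l c = {i. 1 \<le> i \<and> i + l \<le> c \<and> i mod l = 1 mod l}"

definition discrepancy :: "(nat \<Rightarrow> nat) \<Rightarrow> nat list \<Rightarrow> nat \<Rightarrow> real" where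
  "discrepancy b u c = real (card {i \<in> aligned_upto (length u) c. occurs_at b u i})
     - real (card (aligned_upto (length u) c)) / 2^length u"

lemma finite_aligned_upto: "finite (aligned_upto l c)"
  by (rule finite_subset[of _ "{..c}"]) (auto simp: aligned_upto_def)

lemma card_aligned_upto_Suc:
  assumes "1 \<le> l"
  shows "card (aligned_upto l (Suc n)) = n div l"
proof -
  have "aligned_upto l (Suc n) = (\<lambda>m. l * m + 1) ` {..<n div l}"
  proof (intro equalityI subsetI)
    fix i assume "i \<in> aligned_upto l (Suc n)"
    then have i: "1 \<le> i" "i + l \<le> Suc n" "i mod l = 1 mod l"
      by (auto simp: aligned_upto_def)
    then have "l dvd i - 1"
      by (metis mod_eq_dvd_iff_nat)
    then obtain m where m: "i = l * m + 1"
      using i(1) by (metis dvdE le_add_diff_inverse2)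
    with i(2) have "(m + 1) * l \<le> n"
      by (simp add: algebra_simps)
    with assms have "m + 1 \<le> n div l"
      using less_eq_div_iff_mult_less_eq[of l "m + 1" n] by simp
    then have "m < n div l"
      by simp
    with m show "i \<in> (\<lambda>m. l * m + 1) ` {..<n div l}"
      by blast
  next
    fix i assume "i \<in> (\<lambda>m. l * m + 1) ` {..<n div l}"
    then obtain m where m: "m < n div l" "i = l * m + 1"
      by blast
    then have "(m + 1) * l \<le> n"
      using assms less_eq_div_iff_mult_less_eq[of l "m + 1" n] by simp
    moreover have "(l * m + 1) mod l = 1 mod l"
      by (metis add.commute mod_mult_self2 mult.commute)
    ultimately show "i \<in> aligned_upto l (Suc n)"
      using m by (simp add: aligned_upto_def algebra_simps)
  qed
  moreover have "inj_on (\<lambda>m. l * m + 1) {..<n div l}"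
    using assms by (intro inj_onI) simp
  ultimately show ?thesis
    by (simp add: card_image)
qed

lemma card_aligned_upto_split:
  assumes "2^k \<le> c" "1 \<le> l"
  shows "card {i \<in> aligned_upto l c. P i} = card {i \<in> aligned_upto l (2^k). P i}
    + card {i \<in> aligned_upto l c. i < 2^k \<and> 2^k < i + l \<and> P i}
    + card {i \<in> aligned_in_block k l c. P i}"
proof -
  define X where "X = {i \<in> aligned_upto l (2^k). P i}"
  define Y where "Y = {i \<in> aligned_upto l c. i < 2^k \<and> 2^k < i + l \<and> P i}"
  define Z where "Z = {i \<in> aligned_in_block k l c. P i}"
  have pos: "Suc 0 \<le> i" if "2^k \<le> i" for i :: nat
    using that one_le_power[of "2::nat" k] by linarith
  have "{i \<in> aligned_upto l c. P i} = X \<union> Y \<union> Z"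
    using assms by (auto simp: X_def Y_def Z_def aligned_upto_def aligned_in_block_def not_le
        intro: pos)
  moreover have "finite X" "finite Y" "finite Z"
    by (auto simp: X_def Y_def Z_def finite_aligned_upto finite_aligned_in_block)
  moreover have "X \<inter> Y = {}" "(X \<union> Y) \<inter> Z = {}"
    using assms(2) by (auto simp: X_def Y_def Z_def aligned_upto_def aligned_in_block_def)
  ultimately show ?thesis
    by (simp add: card_Un_disjoint X_def Y_def Z_def)
qed

lemma card_straddling_le_1: "card {i \<in> aligned_upto l c. i < m \<and> m < i + l \<and> P i} \<le> 1"
proof -
  have "i = i'" if "i \<in> aligned_upto l c" "i' \<in> aligned_upto l c"
    "i < m" "m < i + l" "i' < m" "m < i' + l" for i i'
  proof -
    have "\<not> i < i'" "\<not> i' < i"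
      using that mod_eq_less_imp_add_le[of i l i'] mod_eq_less_imp_add_le[of i' l i]
      by (auto simp: aligned_upto_def)
    then show ?thesis
      by simp
  qed
  then show ?thesis
    by (auto simp: card_le_Suc0_iff_eq finite_aligned_upto)
qed

lemma card_aligned_in_block_diff_le:
  assumes "c' \<le> c"
  shows "card (aligned_in_block k l c - aligned_in_block k l c') \<le> c - c'"
proof -
  let ?D = "aligned_in_block k l c - aligned_in_block k l c'"
  have "(\<lambda>i. i + l) ` ?D \<subseteq> {c'<..c}"
    by (auto simp: aligned_in_block_def)
  then have "card ((\<lambda>i. i + l) ` ?D) \<le> c - c'"
    using card_mono[of "{c'<..c}"] by fastforce
  then show ?thesis
    by (simp add: card_image)
qed

lemma block_deviation_diff_le:
  assumes "c' \<le> c"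
  shows "\<bar>block_deviation b u k c - block_deviation b u k c'\<bar> \<le> c - c'"
proof -
  define l where "l = length u"
  define X where "X = aligned_in_block k l c"
  define X' where "X' = aligned_in_block k l c'"
  define a where "a = card {i \<in> X - X'. occurs_at b u i}"
  have "X' \<subseteq> X"
    using assms by (auto simp: X_def X'_def aligned_in_block_def)
  have fin: "finite X" "finite X'"
    by (simp_all add: X_def X'_def finite_aligned_in_block)
  have card_X: "card X = card X' + card (X - X')"
    using card_Diff_subset[OF fin(2) \<open>X' \<subseteq> X\<close>] card_mono[OF fin(1) \<open>X' \<subseteq> X\<close>] by simp
  have "{i \<in> X. occurs_at b u i} = {i \<in> X'. occurs_at b u i} \<union> {i \<in> X - X'. occurs_at b u i}"
    using \<open>X' \<subseteq> X\<close> by auto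
  moreover have "card ({i \<in> X'. occurs_at b u i} \<union> {i \<in> X - X'. occurs_at b u i}) =
      card {i \<in> X'. occurs_at b u i} + a"
    unfolding a_def using fin by (intro card_Un_disjoint) auto
  ultimately have card_occ: "card {i \<in> X. occurs_at b u i} = card {i \<in> X'. occurs_at b u i} + a"
    by simp
  have "block_deviation b u k c - block_deviation b u k c' = real a - real (card (X - X')) / 2^l"
    using card_X card_occ
    by (simp add: block_deviation_def block_count_def X_def X'_def l_def add_divide_distrib)
  moreover have "a \<le> card (X - X')"
    unfolding a_def using fin by (intro card_mono) auto
  then have "real a \<le> card (X - X')"
    by simp
  moreover have "real (card (X - X')) / 2^l \<le> card (X - X')" "0 \<le> real (card (X - X')) / 2^l"
    by (simp_all add: divide_le_eq mult_le_cancel_left1)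
  moreover have "card (X - X') \<le> c - c'"
    using card_aligned_in_block_diff_le[OF assms] by (simp add: X_def X'_def)
  then have "real (card (X - X')) \<le> real (c - c')"
    by simp
  ultimately show ?thesis
    unfolding abs_le_iff by linarith
qed

lemma ex_checkpoint_below:
  assumes "2^k \<le> c" "c \<le> 2^Suc k"
  obtains j where "j \<le> 2^test_depth k" "checkpoint k j \<le> c" "c - checkpoint k j \<le> 2^(k - test_depth k)"
proof
  define s :: nat where "s = 2^(k - test_depth k)"
  define j where "j = (c - 2^k) div s"
  have "0 < s"
    by (simp add: s_def)
  have k_eq: "2^k = 2^test_depth k * s"
    using test_depth_le[of k] by (simp add: s_def flip: power_add)
  have j: "j * s \<le> c - 2^k" "c - 2^k < j * s + s"
    using \<open>0 < s\<close> dividend_less_div_times[of s "c - 2^k"] by (simp_all add: j_def)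
  have "c - 2^k \<le> 2^k"
    using assms(2) by simp
  then have "j * s \<le> 2^test_depth k * s"
    using j(1) k_eq by linarith
  then show "j \<le> 2^test_depth k"
    using \<open>0 < s\<close> by simp
  have "checkpoint k j = 2^k + j * s"
    by (simp add: checkpoint_def s_def)
  then show "checkpoint k j \<le> c" "c - checkpoint k j \<le> 2^(k - test_depth k)"
    using j assms(1) unfolding s_def by linarith+
qed

lemma block_deviation_le:
  assumes "good_level k b" "u \<in> test_words (test_depth k)" "2^k \<le> c" "c \<le> 2^Suc k"
  shows "\<bar>block_deviation b u k c\<bar> \<le> 2 * 2^(k - test_depth k)"
proof -
  obtain j where j: "j \<le> 2^test_depth k" and c': "checkpoint k j \<le> c"
    "c - checkpoint k j \<le> 2^(k - test_depth k)"
    using ex_checkpoint_below[OF assms(3,4)] .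
  have "\<bar>block_deviation b u k (checkpoint k j)\<bar> < 2^(k - test_depth k)"
    using assms(1,2) j by (auto simp: good_level_def tests_def)
  moreover have "\<bar>block_deviation b u k c - block_deviation b u k (checkpoint k j)\<bar> \<le> 2^(k - test_depth k)"
    using block_deviation_diff_le[OF c'(1), of b u] c'(2)
    by (metis of_nat_le_iff of_nat_numeral of_nat_power order_trans)
  ultimately show ?thesis
    by linarith
qed

lemma discrepancy_increment_le:
  assumes "good_level k b" "u \<in> test_words (test_depth k)" "2^k \<le> c" "c \<le> 2^Suc k"
  shows "\<bar>discrepancy b u c - discrepancy b u (2^k)\<bar> \<le> 2 * 2^(k - test_depth k) + 1"
proof -
  define l where "l = length u"
  have "1 \<le> l"
    using assms(2) by (simp add: l_def test_words_def)
  define occ where "occ = card {i \<in> aligned_upto l c. i < 2^k \<and> 2^k < i + l \<and> occurs_at b u i}"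
  define pos where "pos = card {i \<in> aligned_upto l c. i < 2^k \<and> 2^k < i + l \<and> True}"
  have "occ \<le> 1" "pos \<le> 1"
    unfolding occ_def pos_def by (rule card_straddling_le_1)+
  moreover have "real pos / 2^l \<le> real pos" "0 \<le> real pos / 2^l"
    by (simp_all add: divide_le_eq mult_le_cancel_left1)
  ultimately have straddle: "\<bar>real occ - real pos / 2^l\<bar> \<le> 1"
    unfolding abs_le_iff by linarith
  have "discrepancy b u c - discrepancy b u (2^k) = block_deviation b u k c + (real occ - real pos / 2^l)"
    using card_aligned_upto_split[OF assms(3) \<open>1 \<le> l\<close>, of "occurs_at b u"]
      card_aligned_upto_split[OF assms(3) \<open>1 \<le> l\<close>, of "\<lambda>_. True"]
    by (simp add: discrepancy_def block_deviation_def block_count_def occ_def pos_def l_def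
        add_divide_distrib)
  then show ?thesis
    using block_deviation_le[OF assms] straddle by linarith
qed

lemma abs_le_of_dyadic_increments:
  fixes F :: "nat \<Rightarrow> real"
  assumes step: "\<And>k c. k0 \<le> k \<Longrightarrow> 2^k \<le> c \<Longrightarrow> c \<le> 2^Suc k \<Longrightarrow> \<bar>F c - F (2^k)\<bar> \<le> \<delta> * 2^k"
    and "0 \<le> \<delta>" "2^k0 \<le> c"
  shows "\<bar>F c\<bar> \<le> \<bar>F (2^k0)\<bar> + 2 * \<delta> * c"
proof -
  have powers: "\<bar>F (2^k)\<bar> \<le> \<bar>F (2^k0)\<bar> + \<delta> * 2^k" if "k0 \<le> k" for k
    using that
  proof (induction k rule: dec_induct)
    case base
    then show ?case
      using \<open>0 \<le> \<delta>\<close> by simp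
  next
    case (step k)
    have "\<bar>F (2^Suc k) - F (2^k)\<bar> \<le> \<delta> * 2^k"
      using assms(1)[OF step.hyps(1)] by simp
    with step.IH show ?case
      by simp
  qed
  have "1 \<le> c"
    using assms(3) one_le_power[of "2::nat" k0] by linarith
  then obtain k where k: "2^k \<le> c" "c < 2^Suc k"
    using ex_power_ivl1[of 2 c] by auto
  have "(2::nat)^k0 < 2^Suc k"
    using k(2) assms(3) by linarith
  then have "k0 \<le> k"
    using power_less_imp_less_exp[of "2::nat" k0 "Suc k"] by simp
  have "\<bar>F c\<bar> \<le> \<bar>F (2^k)\<bar> + \<delta> * 2^k"
    using assms(1)[OF \<open>k0 \<le> k\<close> k(1)] k(2) by simp
  also have "\<dots> \<le> \<bar>F (2^k0)\<bar> + 2 * \<delta> * 2^k"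
    using powers[OF \<open>k0 \<le> k\<close>] by simp
  also have "\<dots> \<le> \<bar>F (2^k0)\<bar> + 2 * \<delta> * c"
    using k(1) \<open>0 \<le> \<delta>\<close> by (simp add: mult_left_mono flip: of_nat_le_iff)
  finally show ?thesis .
qed

lemma discrepancy_increment_small:
  assumes "\<forall>k. good_level k b" "u \<in> test_words R" "0 < \<delta>" "12 / \<delta> < 2^R"
    and "16 * (R + 8) \<le> k" "2^k \<le> c" "c \<le> 2^Suc k"
  shows "\<bar>discrepancy b u c - discrepancy b u (2^k)\<bar> \<le> \<delta> * 2^k"
proof -
  define r where "r = test_depth k"
  have "R \<le> r"
    using assms(5) div_le_mono[OF assms(5), of 16] by (simp add: r_def test_depth_def)
  then have "u \<in> test_words r"
    using assms(2) by (auto simp: test_words_def)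
  then have dev: "\<bar>discrepancy b u c - discrepancy b u (2^k)\<bar> \<le> 2 * 2^(k - r) + 1"
    using discrepancy_increment_le assms(1,6,7) by (simp add: r_def)
  have "(2 * 2^(k - r) + 1) * 2^R \<le> (3 * 2^k :: real)"
  proof -
    have "(2::real)^(k - r) * 2^R \<le> 2^(k - r) * 2^r"
      using \<open>R \<le> r\<close> by simp
    also have "\<dots> = 2^k"
      using test_depth_le[of k] by (simp add: r_def flip: power_add)
    finally have "(2::real)^(k - r) * 2^R \<le> 2^k" .
    moreover have "(2::real)^R \<le> 2^k"
      using \<open>R \<le> r\<close> test_depth_le[of k] by (simp add: r_def)
    ultimately have "2 * (2^(k - r) * 2^R) + 2^R \<le> (3 * 2^k :: real)"
      by linarith
    then show ?thesis
      by (simp add: algebra_simps)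
  qed
  also have "\<dots> \<le> (\<delta> * 2^k / 4) * 2^R"
    using assms(3,4) by (simp add: field_simps)
  finally have "2 * 2^(k - r) + 1 \<le> \<delta> * 2^k / 4"
    by (rule mult_right_le_imp_le) simp
  moreover have "\<delta> * 2^k / 4 \<le> \<delta> * 2^k"
    using assms(3) by simp
  ultimately show ?thesis
    using dev by linarith
qed

lemma discrepancy_div_tendsto_0:
  assumes "\<forall>k. good_level k b" "set u \<subseteq> {0, 1}" "u \<noteq> []"
  shows "(\<lambda>c. discrepancy b u c / c) \<longlonglongrightarrow> 0"
proof (rule LIMSEQ_I)
  fix e :: real
  assume "0 < e"
  define \<delta> where "\<delta> = e / 4"
  have "0 < \<delta>"
    using \<open>0 < e\<close> by (simp add: \<delta>_def)
  obtain R0 where R0: "12 / \<delta> < 2^R0"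
    using real_arch_pow[of 2 "12 / \<delta>"] by auto
  define R where "R = max R0 (length u)"
  have "(2::real)^R0 \<le> 2^R"
    by (simp add: R_def)
  with R0 have R: "12 / \<delta> < 2^R"
    by linarith
  have u: "u \<in> test_words R"
    using assms(2,3) by (auto simp: test_words_def R_def Suc_le_eq)
  define k0 where "k0 = 16 * (R + 8)"
  define F0 where "F0 = \<bar>discrepancy b u (2^k0)\<bar>"
  have bound: "\<bar>discrepancy b u c\<bar> \<le> F0 + 2 * \<delta> * c" if "2^k0 \<le> c" for c
    unfolding F0_def
    using abs_le_of_dyadic_increments[OF discrepancy_increment_small[OF assms(1) u \<open>0 < \<delta>\<close> R]]
      \<open>0 < \<delta>\<close> that by (simp add: k0_def)
  show "\<exists>N. \<forall>n\<ge>N. norm (discrepancy b u n / real n - 0) < e"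
  proof (intro exI allI impI)
    fix n
    assume n: "max (2^k0) (nat \<lceil>F0 / \<delta>\<rceil> + 1) \<le> n"
    then have "F0 / \<delta> < n"
      using real_nat_ceiling_ge[of "F0 / \<delta>"] by linarith
    then have "F0 < \<delta> * n"
      using \<open>0 < \<delta>\<close> by (simp add: divide_less_eq mult.commute)
    moreover have "\<bar>discrepancy b u n\<bar> \<le> F0 + 2 * \<delta> * n"
      using n by (intro bound) simp
    ultimately have "\<bar>discrepancy b u n\<bar> < e * n"
      by (simp add: \<delta>_def)
    moreover have "0 < real n"
      using n by simp
    ultimately show "norm (discrepancy b u n / real n - 0) < e"
      by (simp add: divide_less_eq)
  qed
qed

lemma LIMSEQ_mult_div_over_n:
  assumes "1 \<le> l"
  shows "(\<lambda>n. real l * real (n div l) / real n) \<longlonglongrightarrow> 1"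
proof (rule real_tendsto_sandwich)
  have lower: "real n - real l \<le> real l * real (n div l)" for n
  proof -
    have "n \<le> l * (n div l) + l"
      using mod_less_divisor[of l n] assms mult_div_mod_eq[of l n] by linarith
    then show ?thesis
      by (simp flip: of_nat_mult of_nat_add)
  qed
  show "\<forall>\<^sub>F n in sequentially. 1 - real l / real n \<le> real l * real (n div l) / real n"
    using eventually_gt_at_top[of "0::nat"]
  proof eventually_elim
    case (elim n)
    then have "1 - real l / real n = (real n - real l) / real n"
      by (simp add: field_simps)
    also have "\<dots> \<le> real l * real (n div l) / real n"
      using lower[of n] by (intro divide_right_mono) simp_all
    finally show ?case .
  qed
  show "\<forall>\<^sub>F n in sequentially. real l * real (n div l) / real n \<le> 1"
    using eventually_gt_at_top[of "0::nat"]
  proof eventually_elim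
    case (elim n)
    have "l * (n div l) \<le> n"
      by simp
    with elim show ?case
      by (simp add: divide_le_eq flip: of_nat_mult)
  qed
  show "(\<lambda>n. 1 - real l / real n) \<longlonglongrightarrow> 1"
    using tendsto_diff[OF tendsto_const lim_const_over_n, of 1 "real l"] by simp
qed simp

lemma aligned_frequency_tendsto:
  assumes "\<forall>k. good_level k b" "set u \<subseteq> {0, 1}" "u \<noteq> []"
  shows "(\<lambda>n. real (card {i \<in> aligned_upto (length u) (Suc n). occurs_at b u i})
    / (real n / real (length u))) \<longlonglongrightarrow> 1 / 2^length u"
proof -
  define l where "l = length u"
  have "1 \<le> l"
    using assms(3) by (simp add: l_def Suc_le_eq)
  have "(\<lambda>n. real l * (discrepancy b u (Suc n) / Suc n) * (Suc n / n)) \<longlonglongrightarrow> real l * 0 * 1"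
    by (intro tendsto_mult tendsto_const LIMSEQ_Suc[OF discrepancy_div_tendsto_0[OF assms]]
        LIMSEQ_Suc_n_over_n)
  then have "(\<lambda>n. real l * discrepancy b u (Suc n) / n) \<longlonglongrightarrow> 0"
    by simp
  then have "(\<lambda>n. real l * discrepancy b u (Suc n) / n + (real l * real (n div l) / n) / 2^l)
      \<longlonglongrightarrow> 0 + 1 / 2^l"
    by (intro tendsto_add tendsto_divide LIMSEQ_mult_div_over_n \<open>1 \<le> l\<close> tendsto_const) simp_all
  moreover have "\<forall>\<^sub>F n in sequentially.
      real l * discrepancy b u (Suc n) / n + (real l * real (n div l) / n) / 2^l
      = real (card {i \<in> aligned_upto l (Suc n). occurs_at b u i}) / (real n / real l)"
    using eventually_gt_at_top[of "0::nat"]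
  proof eventually_elim
    case (elim n)
    have "real (card {i \<in> aligned_upto l (Suc n). occurs_at b u i})
        = discrepancy b u (Suc n) + real (n div l) / 2^l"
      using card_aligned_upto_Suc[OF \<open>1 \<le> l\<close>, of n] by (simp add: discrepancy_def l_def)
    then show ?case
      using elim \<open>1 \<le> l\<close> by (simp add: field_simps)
  qed
  ultimately show ?thesis
    by (simp add: l_def tendsto_cong)
qed

section \<open>The normal word\<close>

definition word_of :: "(nat \<Rightarrow> nat) \<Rightarrow> nat \<Rightarrow> nat" where
  "word_of b j = b (odd_index (Suc j))"

lemma even_word_word_of: "even_word (word_of b) = word_of b"
proof
  fix j
  show "even_word (word_of b) j = word_of b j"
    using odd_index_double[of "Suc j"] by (simp add: even_word_def word_of_def)
qed

lemma factor_word_of_eq_iff: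
  assumes "1 \<le> i"
  shows "factor (word_of b) i (length u) = u \<longleftrightarrow> occurs_at b u i"
proof -
  have nth: "factor (word_of b) i (length u) ! q = b (odd_index (i + q))" if "q < length u" for q
    using that assms by (simp add: factor_def word_of_def)
  have "length (factor (word_of b) i (length u)) = length u"
    by (simp add: factor_def)
  with nth show ?thesis
    by (simp add: occurs_at_def list_eq_iff_nth_eq)
qed

lemma aligned_count_word_of:
  assumes "u \<noteq> []"
  shows "aligned_count (word_of b) n u = card {i \<in> aligned_upto (length u) (Suc n). occurs_at b u i}"
proof -
  have "{i. 1 \<le> i \<and> i + length u - 1 \<le> n \<and> i mod length u = 1 mod length u
         \<and> factor (word_of b) i (length u) = u}
      = {i \<in> aligned_upto (length u) (Suc n). occurs_at b u i}"
  proof (intro Collect_cong)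
    fix i
    show "(1 \<le> i \<and> i + length u - 1 \<le> n \<and> i mod length u = 1 mod length u
        \<and> factor (word_of b) i (length u) = u)
      \<longleftrightarrow> i \<in> aligned_upto (length u) (Suc n) \<and> occurs_at b u i"
    proof (cases "1 \<le> i")
      case True
      have "i + length u - 1 \<le> n \<longleftrightarrow> i + length u \<le> Suc n"
        using assms by (cases u) auto
      with True show ?thesis
        using factor_word_of_eq_iff[OF True] by (auto simp: aligned_upto_def)
    qed (simp add: aligned_upto_def)
  qed
  then show ?thesis
    by (simp add: aligned_count_def)
qed

lemma normal_word_of:
  assumes "range b \<subseteq> {0, 1}" "\<forall>k. good_level k b"
  shows "normal_word {0, 1} (word_of b)"
  unfolding normal_word_def
proof (intro conjI allI impI)
  have "range (word_of b) \<subseteq> range b"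
    by (auto simp: word_of_def)
  then show "range (word_of b) \<subseteq> {0, 1}"
    using assms(1) by (rule subset_trans)
next
  fix l :: nat and u :: "nat list"
  assume "1 \<le> l" "length u = l \<and> set u \<subseteq> {0, 1}"
  then have u: "set u \<subseteq> {0, 1}" "u \<noteq> []" and l: "l = length u"
    by auto
  show "(\<lambda>n. real (aligned_count (word_of b) n u) / (real n / real l))
      \<longlonglongrightarrow> 1 / real (card {0, 1::nat}) ^ l"
    using aligned_frequency_tendsto[OF assms(2) u] by (simp add: l aligned_count_word_of[OF u(2)])
qed

theorem theorem9:
  shows "\<exists>x :: nat \<Rightarrow> nat. normal_word {0, 1} x \<and> x = even_word x"
proof -
  obtain b where "range b \<subseteq> {0, 1}" "\<forall>k. good_level k b"
    using ex_good_sequence by blast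
  then show ?thesis
    using normal_word_of even_word_word_of by metis
qed

end
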